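(* For all $k,\ell\in\mathbb N$ the following hold in the $q$-shuffle algebra $\mathbb V$: $$[W_{-k},W_{-\ell}]=0,\qquad [W_{k+1},W_{\ell+1}]=0,$$ $$[W_{-k},W_{\ell+1}]+[W_{k+1},W_{-\ell}]=0,$$ $$[W_{-k},G_{\ell+1}]+[G_{k+1},W_{-\ell}]=0,$$ $$[W_{-k},\tilde G_{\ell+1}]+[\tilde G_{k+1},W_{-\ell}]=0,$$ $$[W_{k+1},G_{\ell+1}]+[G_{k+1},W_{\ell+1}]=0,$$ $$[W_{k+1},\tilde G_{\ell+1}]+[\tilde G_{k+1},W_{\ell+1}]=0,$$ $$[G_{k+1},G_{\ell+1}]=0,\qquad [\tilde G_{k+1},\tilde G_{\ell+1}]=0,$$ $$[\tilde G_{k+1},G_{\ell+1}]+[G_{k+1},\tilde G_{\ell+1}]=0.$$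
   Context: Let $\mathbb F$ be a field and let $q\in\mathbb F$ be nonzero and not a root of unity. Let $\mathbb V$ be the free associative $\mathbb F$-algebra on noncommuting $x,y$, with basis the words (including $1$). Juxtaposition denotes concatenation. Set $\langle x,x\rangle=\langle y,y\rangle=2$ and $\langle x,y\rangle=\langle y,x\rangle=-2$. The $q$-shuffle product $\star$ is the bilinear product determined as follows: - $1\star v=v\star 1=v$; - for nontrivial words $u=u_1\cdots u_r$ and $v=v_1\cdots v_s$, $$u\star v=u_1((u_2\cdots u_r)\star v)+v_1(u\star(v_2\cdots v_s))q^{\langle u_1,v_1\rangle+\cdots+\langle u_r,v_1\rangle}.$$ This makes $\mathbb V$ an associative algebra, the $q$-shuffle algebra. Write $[a,b]=a\star b-b\star a$. For $k\in\mathbb N$: - $W_{-k}=xyx\cdots x$ is the alternating word of length $2k+1$ beginning and ending with $x$; - $W_{k+1}=yxy\cdots y$ is the alternating word of length $2k+1$ beginning and ending with $y$; - $G_k=yxyx\cdots yx$ is the word of length $2k$; - $\tilde G_k=xyxy\cdots xy$ is the word of length $2k$; - $G_0=\tilde G_0=1$. *)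

theory Defs
  imports Main "HOL-Library.Function_Algebras"
begin

text \<open>Elements of the free algebra V are represented by their coefficient functions
  (word \<Rightarrow> field element); finitely supported ones are the actual elements.\<close>

datatype letter = X | Y

type_synonym word = "letter list"

definition pair :: "letter \<Rightarrow> letter \<Rightarrow> int" where
  "pair a b = (if a = b then 2 else -2)"

definition wd :: "word \<Rightarrow> (word \<Rightarrow> 'a::field)" where
  "wd u = (\<lambda>w. if w = u then 1 else 0)"

definition prep :: "letter \<Rightarrow> (word \<Rightarrow> 'a::field) \<Rightarrow> (word \<Rightarrow> 'a)" where
  "prep a F = (\<lambda>w. case w of [] \<Rightarrow> 0 | c # w' \<Rightarrow> (if c = a then F w' else 0))"

fun qsh :: "'a::field \<Rightarrow> word \<Rightarrow> word \<Rightarrow> (word \<Rightarrow> 'a)" where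
  "qsh q [] v = wd v"
| "qsh q (a # u) [] = wd (a # u)"
| "qsh q (a # u) (b # v) =
     (\<lambda>w. prep a (qsh q u (b # v)) w
          + prep b (qsh q (a # u) v) w * q powi (\<Sum>c\<leftarrow>a # u. pair c b))"

definition qstar :: "'a::field \<Rightarrow> (word \<Rightarrow> 'a) \<Rightarrow> (word \<Rightarrow> 'a) \<Rightarrow> (word \<Rightarrow> 'a)" where
  "qstar q f g = (\<lambda>w. \<Sum>(u, v) \<in> {(u, v). length u + length v = length w}.
                        f u * g v * qsh q u v w)"

definition comm :: "'a::field \<Rightarrow> (word \<Rightarrow> 'a) \<Rightarrow> (word \<Rightarrow> 'a) \<Rightarrow> (word \<Rightarrow> 'a)" where
  "comm q f g = (\<lambda>w. qstar q f g w - qstar q g f w)"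

fun other :: "letter \<Rightarrow> letter" where
  "other X = Y" | "other Y = X"

fun alt :: "letter \<Rightarrow> nat \<Rightarrow> word" where
  "alt a 0 = []"
| "alt a (Suc n) = a # alt (other a) n"

definition Wm :: "nat \<Rightarrow> word" where "Wm k = alt X (2 * k + 1)"   (* W_{-k} *)
definition Wp :: "nat \<Rightarrow> word" where "Wp k = alt Y (2 * k + 1)"   (* W_{k+1} *)
definition G :: "nat \<Rightarrow> word" where "G k = alt Y (2 * k)"
definition Gt :: "nat \<Rightarrow> word" where "Gt k = alt X (2 * k)"

end

theory Submission
  imports Defs
begin

text \<open>Regard every expression as a coefficient function and induct on the word \<open>w\<close> at which
  it is evaluated. The coefficient of \<open>c # w\<close> in \<open>u \<star> v\<close> is computed by removing the first
  letter of \<open>u\<close> or of \<open>v\<close>; for alternating words this gives alternating words again, and the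
  twisting exponent only depends on the parity of the length, since even alternating words have
  weight zero. Hence the relations, together with five auxiliary \<open>q\<^sup>2\<close>-twisted combinations,
  form a family in which the coefficient of \<open>c # w\<close> of each member is a combination of
  coefficients of \<open>w\<close> of members. All of them vanish at the empty word, so all vanish.\<close>

declare qsh.simps[simp del]

lemma other_other [simp]: "other (other a) = a"
  by (cases a) auto

lemma other_neq [simp]: "other a \<noteq> a" "a \<noteq> other a"
  by (cases a; simp)+

lemma letter_eq_or_other: "c = a \<or> c = other a"
  by (cases a; cases c) auto

lemma pair_simps [simp]: "pair a a = 2" "pair a (other a) = -2" "pair (other a) a = -2"
  by (simp_all add: pair_def)

definition weight :: "word \<Rightarrow> letter \<Rightarrow> int" where
  "weight u b = (\<Sum>x\<leftarrow>u. pair x b)"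

lemma weight_Nil [simp]: "weight [] b = 0"
  by (simp add: weight_def)

lemma weight_Cons [simp]: "weight (x # u) b = pair x b + weight u b"
  by (simp add: weight_def)

definition alt_odd :: "letter \<Rightarrow> nat \<Rightarrow> word" where
  "alt_odd a k = alt a (2 * k + 1)"

definition alt_even :: "letter \<Rightarrow> nat \<Rightarrow> word" where
  "alt_even a k = alt a (2 * k)"

lemma alt_odd_Cons [simp]: "alt_odd a k = a # alt_even (other a) k"
  by (simp add: alt_odd_def alt_even_def)

lemma alt_even_0 [simp]: "alt_even a 0 = []"
  by (simp add: alt_even_def)

lemma alt_even_Suc [simp]: "alt_even a (Suc k) = a # alt_odd (other a) k"
  by (simp add: alt_odd_def alt_even_def)

lemma weight_alt_even [simp]: "weight (alt_even a k) c = 0"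
  by (induction k) (cases a; cases c; simp add: pair_def)+

lemma wd_Cons_Cons [simp]: "wd (a # u) (c # w) = (if a = c then wd u w else 0)"
  by (simp add: wd_def)

lemma wd_Nil_Cons [simp]: "wd [] (c # w) = 0"
  by (simp add: wd_def)

lemma wd_Nil [simp]: "wd u [] = (if u = [] then 1 else 0)"
  by (simp add: wd_def)

lemma qsh_Nil_left [simp]: "qsh q [] v = wd v"
  by (simp add: qsh.simps)

lemma qsh_Nil_right [simp]: "qsh q u [] = wd u"
  by (cases u) (simp_all add: qsh.simps)

lemma qsh_at_Nil [simp]: "qsh q u v [] = (if u = [] \<and> v = [] then 1 else 0)"
  by (cases u; cases v) (simp_all add: qsh.simps prep_def)

lemma qsh_at_Cons [simp]:
  "qsh q (a # u) (b # v) (c # w) =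
     (if a = c then qsh q u (b # v) w else 0) +
     (if b = c then q powi weight (a # u) b * qsh q (a # u) v w else 0)"
  by (simp add: qsh.simps prep_def weight_def)

lemma qsh_eq_0_if_length_ne: "length w \<noteq> length u + length v \<Longrightarrow> qsh q u v w = 0"
proof (induction w arbitrary: u v)
  case Nil
  then show ?case by simp
next
  case (Cons c w)
  then show ?case
    by (cases u; cases v) (auto simp: wd_def)
qed

definition tcomm :: "'a::field \<Rightarrow> 'a \<Rightarrow> word \<Rightarrow> word \<Rightarrow> word \<Rightarrow> 'a" where
  "tcomm q t u v w = t * qsh q u v w - qsh q v u w"

abbreviation wcomm :: "'a::field \<Rightarrow> word \<Rightarrow> word \<Rightarrow> word \<Rightarrow> 'a" where
  "wcomm q \<equiv> tcomm q 1"

context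
  fixes q :: "'a::field"
begin

definition "comm_odd_odd a k l w = wcomm q (alt_odd a k) (alt_odd a l) w"

definition "comm_odd_odd_mixed a k l w =
  wcomm q (alt_odd a k) (alt_odd (other a) l) w + wcomm q (alt_odd (other a) k) (alt_odd a l) w"

definition "comm_odd_even_cross a k l w =
  wcomm q (alt_odd a k) (alt_even (other a) (Suc l)) w +
  wcomm q (alt_even (other a) (Suc k)) (alt_odd a l) w"

definition "comm_odd_even a k l w =
  wcomm q (alt_odd a k) (alt_even a (Suc l)) w + wcomm q (alt_even a (Suc k)) (alt_odd a l) w"

definition "comm_even_even a k l w = wcomm q (alt_even a k) (alt_even a l) w"

definition "comm_even_even_mixed a k l w =
  wcomm q (alt_even a (Suc k)) (alt_even (other a) (Suc l)) w +
  wcomm q (alt_even (other a) (Suc k)) (alt_even a (Suc l)) w"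

definition "skew_odd_even_cross a k l w =
  tcomm q (q\<^sup>2) (alt_odd a k) (alt_even (other a) l) w -
  tcomm q (q\<^sup>2) (alt_odd a l) (alt_even (other a) k) w"

definition "skew_even_odd a k l w =
  tcomm q (q\<^sup>2) (alt_even a k) (alt_odd a l) w - tcomm q (q\<^sup>2) (alt_even a l) (alt_odd a k) w"

definition "skew_odd_odd_mixed a k l w =
  wcomm q (alt_even (other a) k) (alt_even a (Suc l)) w +
  wcomm q (alt_even a (Suc k)) (alt_even (other a) l) w +
  tcomm q (q\<^sup>2) (alt_odd a k) (alt_odd (other a) l) w -
  tcomm q (q\<^sup>2) (alt_odd a l) (alt_odd (other a) k) w"

definition "skew_even_even_mixed a k l w =
  tcomm q (q\<^sup>2) (alt_even a (Suc k)) (alt_even (other a) (Suc l)) w -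
  tcomm q (q\<^sup>2) (alt_even a (Suc l)) (alt_even (other a) (Suc k)) w +
  q\<^sup>2 * wcomm q (alt_odd a (Suc k)) (alt_odd (other a) l) w -
  q\<^sup>2 * wcomm q (alt_odd a (Suc l)) (alt_odd (other a) k) w"

definition "skew_odd_odd_base a k w =
  q\<^sup>2 * wcomm q (alt_odd a 0) (alt_odd (other a) k) w -
  (q\<^sup>2 - 1) * (wd (alt_even a (Suc k)) w - wd (alt_even (other a) (Suc k)) w)"

lemmas family_defs =
  comm_odd_odd_def comm_odd_odd_mixed_def comm_odd_even_cross_def comm_odd_even_def
  comm_even_even_def comm_even_even_mixed_def skew_odd_even_cross_def skew_even_odd_def
  skew_odd_odd_mixed_def skew_even_even_mixed_def skew_odd_odd_base_def tcomm_def

lemma comm_odd_odd_Cons: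
  "comm_odd_odd a k l (a # w) = skew_odd_even_cross a k l w"
  "comm_odd_odd a k l (other a # w) = 0"
  by (simp_all add: family_defs algebra_simps)

lemma comm_odd_odd_mixed_Cons:
  assumes "q \<noteq> 0"
  shows "comm_odd_odd_mixed a k l (a # w) = inverse (q\<^sup>2) * skew_even_odd (other a) k l w"
    and "comm_odd_odd_mixed a k l (other a # w) = inverse (q\<^sup>2) * skew_even_odd a k l w"
  using assms by (simp_all add: family_defs field_simps power_int_minus)

lemma comm_odd_even_cross_Cons:
  assumes "q \<noteq> 0"
  shows "comm_odd_even_cross a k l (a # w) =
           comm_even_even (other a) k (Suc l) w + comm_even_even (other a) (Suc k) l w"
    and "comm_odd_even_cross a k l (other a # w) = (1 + inverse (q\<^sup>2)) * comm_odd_odd a k l w"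
  using assms by (simp_all add: family_defs field_simps power_int_minus)

lemma comm_odd_even_Cons:
  "comm_odd_even a k l (a # w) = skew_odd_odd_mixed a k l w"
  "comm_odd_even a k l (other a # w) = 0"
  by (simp_all add: family_defs algebra_simps)

lemma comm_even_even_Cons:
  "comm_even_even a k l (a # w) =
     (if 0 < k \<and> 0 < l then comm_odd_even_cross (other a) (k - 1) (l - 1) w else 0)"
  "comm_even_even a k l (other a # w) = 0"
  by (cases k; cases l; simp add: family_defs algebra_simps)+

lemma comm_even_even_mixed_Cons:
  "comm_even_even_mixed a k l (a # w) = comm_odd_even (other a) k l w"
  "comm_even_even_mixed a k l (other a # w) = comm_odd_even a k l w"
  by (simp_all add: family_defs algebra_simps)

lemma skew_odd_even_cross_Cons:
  assumes "q \<noteq> 0"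
  shows "skew_odd_even_cross a k l (a # w) = (1 + q\<^sup>2) * comm_even_even (other a) k l w"
    and "skew_odd_even_cross a k l (other a # w) =
           (if 0 < l then comm_odd_odd a k (l - 1) w else 0) +
           (if 0 < k then comm_odd_odd a (k - 1) l w else 0)"
  using assms by (cases k; cases l; simp add: family_defs field_simps power_int_minus)+

lemma skew_even_odd_Cons:
  assumes "q \<noteq> 0"
  shows "skew_even_odd a k l (a # w) =
           (if 0 < k \<and> 0 < l then skew_even_even_mixed a (k - 1) (l - 1) w
            else if 0 < k then - skew_odd_odd_base a (k - 1) w
            else if 0 < l then skew_odd_odd_base a (l - 1) w else 0)"
    and "skew_even_odd a k l (other a # w) = 0"
  using assms by (cases k; cases l; simp add: family_defs field_simps power_int_minus)+

lemma skew_odd_odd_mixed_Cons: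
  assumes "q \<noteq> 0"
  shows "skew_odd_odd_mixed a k l (a # w) = (1 + inverse (q\<^sup>2)) * skew_even_odd (other a) k l w"
    and "skew_odd_odd_mixed a k l (other a # w) =
           (if 0 < k then comm_odd_even a (k - 1) l w else 0) +
           (if 0 < l then comm_odd_even a k (l - 1) w else 0)"
  using assms by (cases k; cases l; simp add: family_defs field_simps power_int_minus)+

lemma skew_even_even_mixed_Cons:
  assumes "q \<noteq> 0"
  shows "skew_even_even_mixed a k l (a # w) = (1 + q\<^sup>2) * comm_odd_even (other a) k l w"
    and "skew_even_even_mixed a k l (other a # w) =
           skew_even_odd a k (Suc l) w + skew_even_odd a (Suc k) l w"
  using assms by (simp_all add: family_defs field_simps power_int_minus)

lemma skew_odd_odd_base_Cons:
  assumes "q \<noteq> 0"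
  shows "skew_odd_odd_base a k (a # w) = 0"
    and "skew_odd_odd_base a k (other a # w) = skew_even_odd a 0 k w"
  using assms by (simp_all add: family_defs field_simps power_int_minus)

lemmas family_Cons =
  comm_odd_odd_Cons comm_odd_odd_mixed_Cons comm_odd_even_cross_Cons comm_odd_even_Cons
  comm_even_even_Cons comm_even_even_mixed_Cons skew_odd_even_cross_Cons skew_even_odd_Cons
  skew_odd_odd_mixed_Cons skew_even_even_mixed_Cons skew_odd_odd_base_Cons

definition family_vanishes_at :: "word \<Rightarrow> bool" where
  "family_vanishes_at w \<longleftrightarrow>
     (\<forall>a k l. comm_odd_odd a k l w = 0 \<and> comm_odd_odd_mixed a k l w = 0 \<and>
        comm_odd_even_cross a k l w = 0 \<and> comm_odd_even a k l w = 0 \<and>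
        comm_even_even a k l w = 0 \<and> comm_even_even_mixed a k l w = 0 \<and>
        skew_odd_even_cross a k l w = 0 \<and> skew_even_odd a k l w = 0 \<and>
        skew_odd_odd_mixed a k l w = 0 \<and> skew_even_even_mixed a k l w = 0 \<and>
        skew_odd_odd_base a k w = 0)"

lemma family_vanishes_at_Nil: "family_vanishes_at []"
  by (simp add: family_vanishes_at_def family_defs)

lemma family_vanishes_at_Cons:
  assumes "q \<noteq> 0" and "family_vanishes_at w"
  shows "family_vanishes_at (c # w)"
  unfolding family_vanishes_at_def
proof (intro allI)
  fix a k l
  consider "c = a" | "c = other a"
    using letter_eq_or_other by blast
  then show "comm_odd_odd a k l (c # w) = 0 \<and> comm_odd_odd_mixed a k l (c # w) = 0 \<and>
        comm_odd_even_cross a k l (c # w) = 0 \<and> comm_odd_even a k l (c # w) = 0 \<and>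
        comm_even_even a k l (c # w) = 0 \<and> comm_even_even_mixed a k l (c # w) = 0 \<and>
        skew_odd_even_cross a k l (c # w) = 0 \<and> skew_even_odd a k l (c # w) = 0 \<and>
        skew_odd_odd_mixed a k l (c # w) = 0 \<and> skew_even_even_mixed a k l (c # w) = 0 \<and>
        skew_odd_odd_base a k (c # w) = 0"
    by cases (use assms in \<open>simp_all add: family_Cons family_vanishes_at_def\<close>)
qed

lemma family_vanishes: "q \<noteq> 0 \<Longrightarrow> family_vanishes_at w"
  by (induction w) (simp_all add: family_vanishes_at_Nil family_vanishes_at_Cons)

end

lemma finite_UNIV_letter: "finite (UNIV :: letter set)"
proof -
  have "UNIV = {X, Y}"
    using letter.exhaust by auto
  then show ?thesis
    by (metis finite.emptyI finite.insertI)
qed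

lemma finite_word_pairs_of_total_length: "finite {(u :: word, v :: word). length u + length v = n}"
proof -
  let ?short = "{xs :: word. set xs \<subseteq> UNIV \<and> length xs \<le> n}"
  have "finite (?short \<times> ?short)"
    using finite_lists_length_le[OF finite_UNIV_letter] by blast
  moreover have "{(u, v). length u + length v = n} \<subseteq> ?short \<times> ?short"
    by auto
  ultimately show ?thesis
    by (rule finite_subset[rotated])
qed

lemma qstar_wd: "qstar q (wd u) (wd v) = qsh q u v"
proof
  fix w
  have "(\<lambda>(u', v'). wd u u' * wd v v' * qsh q u' v' w) =
        (\<lambda>p. if p = (u, v) then qsh q u v w else 0)"
    by (auto simp: wd_def)
  then show "qstar q (wd u) (wd v) w = qsh q u v w"
    unfolding qstar_def
    using finite_word_pairs_of_total_length[of "length w"] qsh_eq_0_if_length_ne[of w u v q]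
    by (auto simp: sum.delta)
qed

lemma comm_wd: "comm q (wd u) (wd v) = wcomm q u v"
  by (simp add: comm_def qstar_wd tcomm_def fun_eq_iff)

lemma Wm_alt_odd: "Wm k = alt_odd X k"
  by (simp add: Wm_def alt_odd_def del: alt_odd_Cons)

lemma Wp_alt_odd: "Wp k = alt_odd Y k"
  by (simp add: Wp_def alt_odd_def del: alt_odd_Cons)

lemma G_alt_even: "G k = alt_even Y k"
  by (simp add: G_def alt_even_def del: alt_even_0 alt_even_Suc)

lemma Gt_alt_even: "Gt k = alt_even X k"
  by (simp add: Gt_def alt_even_def del: alt_even_0 alt_even_Suc)

theorem proposition5p10:
  fixes q :: "'a::field" and k l :: nat
  assumes "q \<noteq> 0" and "\<forall>n>0. q ^ n \<noteq> 1"
  defines "br \<equiv> \<lambda>u v. comm q (wd u) (wd v)"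
  shows "br (Wm k) (Wm l) = 0 \<and>
         br (Wp k) (Wp l) = 0 \<and>
         br (Wm k) (Wp l) + br (Wp k) (Wm l) = 0 \<and>
         br (Wm k) (G (l + 1)) + br (G (k + 1)) (Wm l) = 0 \<and>
         br (Wm k) (Gt (l + 1)) + br (Gt (k + 1)) (Wm l) = 0 \<and>
         br (Wp k) (G (l + 1)) + br (G (k + 1)) (Wp l) = 0 \<and>
         br (Wp k) (Gt (l + 1)) + br (Gt (k + 1)) (Wp l) = 0 \<and>
         br (G (k + 1)) (G (l + 1)) = 0 \<and>
         br (Gt (k + 1)) (Gt (l + 1)) = 0 \<and>
         br (Gt (k + 1)) (G (l + 1)) + br (G (k + 1)) (Gt (l + 1)) = 0"
proof -
  have "family_vanishes_at q w" for w
    using assms(1) by (rule family_vanishes)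
  then have "comm_odd_odd q a k l = 0" "comm_even_even q a (Suc k) (Suc l) = 0"
    "comm_odd_odd_mixed q a k l = 0" "comm_odd_even_cross q a k l = 0"
    "comm_odd_even q a k l = 0" "comm_even_even_mixed q a k l = 0" for a
    by (simp_all add: family_vanishes_at_def fun_eq_iff)
  from this[of X] this[of Y] show ?thesis
    unfolding br_def comm_wd Wm_alt_odd Wp_alt_odd G_alt_even Gt_alt_even
    by (simp add: family_defs fun_eq_iff del: alt_odd_Cons alt_even_Suc alt_even_0)
qed

end
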